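(* Let $\widehat{\mathbf M}=(\hat{\mathbb X},\hat{\mathbb U},\mathbb Y,\hat x_0,\hat{\mathbf t},\hat h)$ be a gMDP, $\psi$ an scLTL formula with DFA $\mathcal A_\psi=(Q,q_0,\Sigma,F,\tau)$, $\delta\ge0$, $\mu$ a stationary Markov policy on $\widehat{\mathbf M}\otimes\mathcal A_\psi$, and $\hat{\mathbf C}$ the control strategy for $\widehat{\mathbf M}$ corresponding to $\mu$, so that $\mathbb P_{\hat{\mathbf C}\times\widehat{\mathbf M}}(\boldsymbol\omega\models\psi)$ equals the probability that executions of the product under $\mu$ from its initial state reach $\hat{\mathbb X}\times F$. Then $$\mathbb P_{\hat{\mathbf C}\times\widehat{\mathbf M}}(\boldsymbol\omega\models\psi)\ \ge\ \mathcal S^\mu_\delta\ \ge\ \mathbb P_{\hat{\mathbf C}\times\widehat{\mathbf M}}(\boldsymbol\omega\models\psi)-\delta\,h(\hat{\mathbb X}\times F),$$ where $\mathcal S^\mu_\delta:=\max\{\mathbf 1_F(\bar q_0),V^\mu_\infty(\hat x_0,\bar q_0)\}$ with $\bar q_0=\tau(q_0,\mathsf L(\hat h(\hat x_0)))$, $V^\mu_\infty=\lim_{l\to\infty}(\mathbf T^\mu_\delta)^l(0)$, and $h(\hat{\mathbb X}\times F)$ is the mean hitting time of $\hat{\mathbb X}\times F$ from the initial state of the product.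
   Context: A gMDP $\widehat{\mathbf M}=(\hat{\mathbb X},\hat{\mathbb U},\mathbb Y,\hat x_0,\hat{\mathbf t},\hat h)$: Polish state/input spaces, metric output space $\mathbb Y$, initial state $\hat x_0$, kernel $\hat{\mathbf t}(\cdot\mid\hat x,\hat u)$, measurable output map $\hat h$; output trace $y_t=\hat h(\hat x_t)$. A control strategy is a gMDP reading the state and outputting a distribution over inputs; $\mathbb P_{\hat{\mathbf C}\times\widehat{\mathbf M}}$ is the induced measure on output traces. $\Sigma=2^{\mathsf{AP}}$, $\mathsf L:\mathbb Y\to\Sigma$ measurable labelling, word $\boldsymbol\omega=\mathsf L(y_0)\mathsf L(y_1)\cdots$; $\psi$ scLTL, $\mathcal A_\psi$ a DFA (accepting set $F$, transition $\tau$) accepting exactly the words satisfying $\psi$. Product $\widehat{\mathbf M}\otimes\mathcal A_\psi$: states $\hat{\mathbb X}\times Q$, inputs $\hat{\mathbb U}$, initial state $(\hat x_0,\bar q_0)$, kernel $\bar{\mathbf t}(d\hat x'\times\{q'\}\mid\hat x,q,u)=\mathbf 1_{\{q'\}}(\tau(q,\mathsf L(\hat h(\hat x'))))\hat{\mathbf t}(d\hat x'\mid\hat x,u)$. Stationary Markov policy: universally measurable $\mu:\hat{\mathbb X}\times Q\to\mathcal P(\hat{\mathbb U})$. $\mathbf T^\mu(V)(\hat x,q)=\int\max\{\mathbf 1_F(q'),V(\hat x',q')\}\bar{\mathbf t}(d\hat x'\times\{q'\}\mid\hat x,q,\mu(\hat x,q))$, $\mathbf T^\mu_\delta(V)=\mathbf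 L(\mathbf T^\mu(V)-\delta)$ with $\mathbf L(r)=\min(1,\max(0,r))$. For $A\subseteq\hat{\mathbb X}\times Q$, $H_A(\hat x,q)=\inf\{t\in\mathbb N\cup\{\infty\}:(\hat x_t,q_t)\in A\}$ on executions of the product under $\mu$ started at $(\hat x,q)$, and the mean hitting time is $h(A)=\mathbb E[H_A]=\sum_{n\ge1}\mathbb P(H_A\ge n)$ evaluated from the product's initial state (possibly $+\infty$). *)

theory Defs
  imports "HOL-Probability.Probability"
begin

definition prod_step ::
  "('x \<Rightarrow> 'u \<Rightarrow> 'x measure) \<Rightarrow> ('x \<Rightarrow> 'y) \<Rightarrow> ('y \<Rightarrow> 'ap set) \<Rightarrow> ('q \<Rightarrow> 'ap set \<Rightarrow> 'q)
   \<Rightarrow> ('x \<times> 'q \<Rightarrow> 'u measure) \<Rightarrow> ('x \<times> 'q \<Rightarrow> ennreal) \<Rightarrow> 'x \<times> 'q \<Rightarrow> ennreal" where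
  "prod_step t h L \<tau> \<mu> f s =
     (\<integral>\<^sup>+ u. (\<integral>\<^sup>+ x'. f (x', \<tau> (snd s) (L (h x'))) \<partial>(t (fst s) u)) \<partial>(\<mu> s))"

definition T_mu ::
  "('x \<Rightarrow> 'u \<Rightarrow> 'x measure) \<Rightarrow> ('x \<Rightarrow> 'y) \<Rightarrow> ('y \<Rightarrow> 'ap set) \<Rightarrow> ('q \<Rightarrow> 'ap set \<Rightarrow> 'q)
   \<Rightarrow> 'q set \<Rightarrow> ('x \<times> 'q \<Rightarrow> 'u measure) \<Rightarrow> ('x \<times> 'q \<Rightarrow> real) \<Rightarrow> 'x \<times> 'q \<Rightarrow> real" where
  "T_mu t h L \<tau> F \<mu> V s =
     enn2real (prod_step t h L \<tau> \<mu> (\<lambda>s'. ennreal (max (indicator F (snd s')) (V s'))) s)"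

definition clip01 :: "real \<Rightarrow> real" where
  "clip01 r = min 1 (max 0 r)"

definition T_mu_delta ::
  "('x \<Rightarrow> 'u \<Rightarrow> 'x measure) \<Rightarrow> ('x \<Rightarrow> 'y) \<Rightarrow> ('y \<Rightarrow> 'ap set) \<Rightarrow> ('q \<Rightarrow> 'ap set \<Rightarrow> 'q)
   \<Rightarrow> 'q set \<Rightarrow> ('x \<times> 'q \<Rightarrow> 'u measure) \<Rightarrow> real \<Rightarrow> ('x \<times> 'q \<Rightarrow> real) \<Rightarrow> 'x \<times> 'q \<Rightarrow> real" where
  "T_mu_delta t h L \<tau> F \<mu> \<delta> V s = clip01 (T_mu t h L \<tau> F \<mu> V s - \<delta>)"

definition V_inf ::
  "('x \<Rightarrow> 'u \<Rightarrow> 'x measure) \<Rightarrow> ('x \<Rightarrow> 'y) \<Rightarrow> ('y \<Rightarrow> 'ap set) \<Rightarrow> ('q \<Rightarrow> 'ap set \<Rightarrow> 'q)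
   \<Rightarrow> 'q set \<Rightarrow> ('x \<times> 'q \<Rightarrow> 'u measure) \<Rightarrow> real \<Rightarrow> 'x \<times> 'q \<Rightarrow> real" where
  "V_inf t h L \<tau> F \<mu> \<delta> s = lim (\<lambda>l. ((T_mu_delta t h L \<tau> F \<mu> \<delta>) ^^ l) (\<lambda>_. 0) s)"

text \<open>Law of the hitting time H_A of a Markov chain with one-step expectation operator K:
  hit_le K A n s = P_s(H_A \<le> n), defined by the usual first-step recursion.\<close>
primrec hit_le :: "(('s \<Rightarrow> ennreal) \<Rightarrow> 's \<Rightarrow> ennreal) \<Rightarrow> 's set \<Rightarrow> nat \<Rightarrow> 's \<Rightarrow> ennreal" where
  "hit_le K A 0 s = indicator A s"
| "hit_le K A (Suc n) s = (if s \<in> A then 1 else K (hit_le K A n) s)"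

definition reach_prob :: "(('s \<Rightarrow> ennreal) \<Rightarrow> 's \<Rightarrow> ennreal) \<Rightarrow> 's set \<Rightarrow> 's \<Rightarrow> ennreal" where
  "reach_prob K A s = (SUP n. hit_le K A n s)"

text \<open>Mean hitting time E_s[H_A] = sum_{n>=1} P_s(H_A >= n) = sum_{n>=0} (1 - P_s(H_A <= n)),
  possibly infinite.\<close>
definition mean_hit :: "(('s \<Rightarrow> ennreal) \<Rightarrow> 's \<Rightarrow> ennreal) \<Rightarrow> 's set \<Rightarrow> 's \<Rightarrow> ennreal" where
  "mean_hit K A s = (\<Sum>n. 1 - hit_le K A n s)"

definition univ_measurable :: "('x::topological_space \<times> 'q \<Rightarrow> 'b) \<Rightarrow> 'b measure \<Rightarrow> bool" where
  "univ_measurable f M \<longleftrightarrow>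
     (\<forall>P. prob_space P \<and> sets P = sets (borel \<Otimes>\<^sub>M count_space UNIV) \<longrightarrow>
          f \<in> measurable (completion P) M)"

end

theory Submission
  imports Defs
begin

text \<open>Let \<open>H\<close> be the hitting time of \<open>UNIV \<times> F\<close> in the product chain and
  \<open>V\<^sub>l = (T\<^sup>\<mu>\<^sub>\<delta>)\<^sup>l 0\<close>. Off \<open>F\<close> one has \<open>P(H \<le> l+1) = K(P(H \<le> l))\<close> while
  \<open>max(1\<^sub>F, V\<^sub>l\<^sub>+\<^sub>1) \<ge> K(max(1\<^sub>F, V\<^sub>l)) - \<delta>\<close>, and on \<open>F\<close> both sides equal 1. Hence by
  induction on \<open>l\<close>
  \<open>max(1\<^sub>F, V\<^sub>l) \<le> P(H \<le> l) \<le> max(1\<^sub>F, V\<^sub>l) + \<delta> \<Sum>\<^sub>m\<^sub><\<^sub>l P(H > m)\<close>: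
  a loss of \<open>\<delta>\<close> is paid at step \<open>m\<close> only on executions that have not reached \<open>F\<close> yet.
  Letting \<open>l \<rightarrow> \<infinity>\<close> gives both bounds, as \<open>\<Sum>\<^sub>m P(H > m)\<close> is the mean hitting time.

  Since the policy is only universally measurable, the one-step operator \<open>K\<close> integrates
  functions that are only universally measurable; it is additive on them because it equals a
  single integral against the completion of the one-step distribution
  \<open>\<mu> s \<bind> t (fst s)\<close>.\<close>

definition univ_borel_measurable :: "('x::topological_space \<Rightarrow> ennreal) \<Rightarrow> bool" where
  "univ_borel_measurable g \<longleftrightarrow>
     (\<forall>P. prob_space P \<and> sets P = sets (borel::'x measure) \<longrightarrow> g \<in> borel_measurable (completion P))"

lemma borel_measurable_completion_AE_cong:
  fixes f g :: "'a \<Rightarrow> ennreal"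
  assumes ae: "AE x in completion M. f x = g x" and g: "g \<in> borel_measurable (completion M)"
  shows "f \<in> borel_measurable (completion M)"
proof (rule measurableI)
  fix A :: "ennreal set" assume "A \<in> sets borel"
  then have gA: "g -` A \<inter> space (completion M) \<in> sets (completion M)"
    by (rule measurable_sets[OF g])
  have "AE x in completion M.
      x \<in> g -` A \<inter> space (completion M) \<longleftrightarrow> x \<in> f -` A \<inter> space (completion M)"
    using ae by eventually_elim auto
  from completion.in_sets_AE[OF this gA]
  show "f -` A \<inter> space (completion M) \<in> sets (completion M)" by auto
qed auto

lemma measurable_completion_distr:
  assumes f: "f \<in> M \<rightarrow>\<^sub>M N"
  shows "f \<in> completion M \<rightarrow>\<^sub>M completion (distr M N f)"
proof -
  have "distr (completion M) (distr M N f) f = distr M N f"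
    using f by (simp add: distr_completion cong: distr_cong)
  moreover have "f \<in> completion M \<rightarrow>\<^sub>M distr M N f"
    using f by (simp add: measurable_completion cong: measurable_cong_sets)
  ultimately show ?thesis
    by (intro completion.measurable_completion2) auto
qed

lemma univ_borel_measurable_AE_eq_bind:
  assumes M: "prob_space M" and \<rho>: "\<rho> \<in> M \<rightarrow>\<^sub>M prob_algebra borel"
    and g: "univ_borel_measurable g"
  obtains g' where "g' \<in> borel_measurable borel"
    and "AE x in M \<bind> \<rho>. g x = g' x" and "AE z in M. AE x in \<rho> z. g x = g' x"
proof -
  have ne: "space M \<noteq> {}" using M prob_space.not_empty by blast
  have sets_\<nu>: "sets (M \<bind> \<rho>) = sets borel"
    using ne measurable_space[OF \<rho>] by (intro sets_bind) (auto simp: space_prob_algebra)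
  have "prob_space (M \<bind> \<rho>)"
  proof (rule prob_space.prob_space_bind[OF M _ measurable_prob_algebraD[OF \<rho>]])
    show "AE z in M. prob_space (\<rho> z)"
      using measurable_space[OF \<rho>] by (auto simp: space_prob_algebra)
  qed
  with g sets_\<nu> have "g \<in> borel_measurable (completion (M \<bind> \<rho>))"
    unfolding univ_borel_measurable_def by blast
  then obtain g' where g': "g' \<in> borel_measurable (M \<bind> \<rho>)"
    and ae: "AE x in M \<bind> \<rho>. g x = g' x"
    by (rule completion_ex_borel_measurable[elim_format]) blast
  from ae obtain N where N: "N \<in> null_sets (M \<bind> \<rho>)" "{x. g x \<noteq> g' x} \<subseteq> N"
    by (rule AE_E) (auto simp: sets_eq_imp_space_eq[OF sets_\<nu>])
  have "N \<in> sets borel" using N(1) sets_\<nu> by auto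
  then have "AE z in M. AE x in \<rho> z. x \<notin> N"
    using AE_not_in[OF N(1)] by (subst (asm) AE_bind[OF measurable_prob_algebraD[OF \<rho>]]) auto
  then have "AE z in M. AE x in \<rho> z. g x = g' x"
    using N(2) by (elim eventually_mono) auto
  moreover have "g' \<in> borel_measurable borel"
    using g' sets_\<nu> by (simp cong: measurable_cong_sets)
  ultimately show ?thesis using ae that by blast
qed

lemma nn_integral_bind_univ_borel_measurable:
  assumes M: "prob_space M" and \<rho>: "\<rho> \<in> M \<rightarrow>\<^sub>M prob_algebra borel"
    and g: "univ_borel_measurable g"
  shows "(\<integral>\<^sup>+x. g x \<partial>(M \<bind> \<rho>)) = (\<integral>\<^sup>+z. \<integral>\<^sup>+x. g x \<partial>\<rho> z \<partial>M)"
proof -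
  obtain g' where g': "g' \<in> borel_measurable borel"
    and ae: "AE x in M \<bind> \<rho>. g x = g' x" and ae_nested: "AE z in M. AE x in \<rho> z. g x = g' x"
    using univ_borel_measurable_AE_eq_bind[OF M \<rho> g] .
  have "(\<integral>\<^sup>+x. g x \<partial>(M \<bind> \<rho>)) = (\<integral>\<^sup>+x. g' x \<partial>(M \<bind> \<rho>))"
    using ae by (rule nn_integral_cong_AE)
  also have "\<dots> = (\<integral>\<^sup>+z. \<integral>\<^sup>+x. g' x \<partial>\<rho> z \<partial>M)"
    using g' measurable_prob_algebraD[OF \<rho>] by (rule nn_integral_bind)
  also have "\<dots> = (\<integral>\<^sup>+z. \<integral>\<^sup>+x. g x \<partial>\<rho> z \<partial>M)"
    using ae_nested by (intro nn_integral_cong_AE) (auto elim!: eventually_mono intro: nn_integral_cong_AE)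
  finally show ?thesis .
qed

lemma measurable_nn_integral_kernel_completion:
  assumes M: "prob_space M" and \<rho>: "\<rho> \<in> completion M \<rightarrow>\<^sub>M prob_algebra borel"
    and g: "univ_borel_measurable g"
  shows "(\<lambda>z. \<integral>\<^sup>+x. g x \<partial>\<rho> z) \<in> borel_measurable (completion M)"
proof -
  obtain g' where g': "g' \<in> borel_measurable borel"
    and ae_nested: "AE z in completion M. AE x in \<rho> z. g x = g' x"
    using univ_borel_measurable_AE_eq_bind[OF prob_space.prob_space_completion[OF M] \<rho> g] .
  have "AE z in completion M. (\<integral>\<^sup>+x. g x \<partial>\<rho> z) = (\<integral>\<^sup>+x. g' x \<partial>\<rho> z)"
    using ae_nested by (elim eventually_mono) (rule nn_integral_cong_AE)
  moreover have "(\<lambda>z. \<integral>\<^sup>+x. g' x \<partial>\<rho> z) \<in> borel_measurable (completion M)"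
    using measurable_prob_algebraD[OF \<rho>] nn_integral_measurable_subprob_algebra[OF g']
    by (rule measurable_compose)
  ultimately show ?thesis by (rule borel_measurable_completion_AE_cong)
qed

lemma ereal_diff_mult_le_of_ennreal:
  fixes p s \<delta> :: real and m :: ennreal
  assumes s: "0 \<le> s" and \<delta>: "0 \<le> \<delta>" and le: "ennreal p \<le> ennreal s + ennreal \<delta> * m"
  shows "ereal p - ereal \<delta> * enn2ereal m \<le> ereal s"
proof (cases m)
  case (real r)
  with \<delta> have "ennreal p \<le> ennreal (s + \<delta> * r)"
    using le s by (simp add: ennreal_mult ennreal_plus)
  then have "p \<le> s + \<delta> * r" using s \<delta> real by (subst (asm) ennreal_le_iff) auto
  then show ?thesis using real by simp
next
  case top
  show ?thesis
  proof (cases "\<delta> = 0")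
    case True
    then have "p \<le> s" using le s by simp
    then show ?thesis using True by (simp add: zero_ereal_def[symmetric])
  next
    case False
    then show ?thesis using top \<delta> by simp
  qed
qed

locale gmdp_dfa_product =
  fixes t :: "'x::polish_space \<Rightarrow> 'u::polish_space \<Rightarrow> 'x measure"
    and h :: "'x \<Rightarrow> 'y::metric_space"
    and L :: "'y \<Rightarrow> 'ap::finite set"
    and \<tau> :: "'q::finite \<Rightarrow> 'ap set \<Rightarrow> 'q"
    and \<mu> :: "'x \<times> 'q \<Rightarrow> 'u measure"
  assumes kernel: "case_prod t \<in> measurable (borel \<Otimes>\<^sub>M borel) (prob_algebra borel)"
    and h_meas: "h \<in> borel_measurable borel"
    and L_meas: "L \<in> measurable borel (count_space UNIV)"
    and policy: "univ_measurable \<mu> (prob_algebra borel)"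
begin

abbreviation K :: "('x \<times> 'q \<Rightarrow> ennreal) \<Rightarrow> 'x \<times> 'q \<Rightarrow> ennreal" where
  "K \<equiv> prod_step t h L \<tau> \<mu>"

definition univ_measurable_sections :: "('x \<times> 'q \<Rightarrow> ennreal) \<Rightarrow> bool" where
  "univ_measurable_sections f \<longleftrightarrow> (\<forall>q. univ_borel_measurable (\<lambda>x. f (x, q)))"

definition next_distr :: "'x \<times> 'q \<Rightarrow> 'x measure" where
  "next_distr s = \<mu> s \<bind> t (fst s)"

lemma t_measurable: "t x \<in> borel \<rightarrow>\<^sub>M prob_algebra borel"
  using measurable_compose[OF measurable_Pair1' kernel] by simp

lemma mu_space: "\<mu> s \<in> space (prob_algebra borel)"
proof -
  let ?P = "return (borel \<Otimes>\<^sub>M count_space UNIV) s"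
  have "prob_space ?P" by (rule prob_space_return) (simp add: space_pair_measure)
  then have "\<mu> \<in> completion ?P \<rightarrow>\<^sub>M prob_algebra borel"
    using policy unfolding univ_measurable_def by simp
  from measurable_space[OF this, of s] show ?thesis by (simp add: space_pair_measure)
qed

lemma mu_section_measurable:
  assumes P: "prob_space P" "sets P = sets (borel :: 'x measure)"
  shows "(\<lambda>x. \<mu> (x, q)) \<in> completion P \<rightarrow>\<^sub>M prob_algebra borel"
proof -
  let ?f = "\<lambda>x::'x. (x, q)"
  have f: "?f \<in> P \<rightarrow>\<^sub>M borel \<Otimes>\<^sub>M count_space UNIV"
    using P(2) by (simp cong: measurable_cong_sets)
  let ?P' = "distr P (borel \<Otimes>\<^sub>M count_space UNIV) ?f"
  have "prob_space ?P'" using f by (rule prob_space.prob_space_distr[OF P(1)])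
  then have "\<mu> \<in> completion ?P' \<rightarrow>\<^sub>M prob_algebra borel"
    using policy unfolding univ_measurable_def by simp
  with measurable_completion_distr[OF f] show ?thesis
    by (rule measurable_compose[where g = \<mu>])
qed

lemma prob_space_next_distr: "prob_space (next_distr s)"
  unfolding next_distr_def using mu_space t_measurable by (rule prob_space_bind')

lemma sets_next_distr: "sets (next_distr s) = sets borel"
  unfolding next_distr_def using mu_space t_measurable by (rule sets_bind')

lemma univ_borel_measurable_successor:
  assumes "univ_measurable_sections f"
  shows "univ_borel_measurable (\<lambda>x'. f (x', \<tau> q (L (h x'))))"
  unfolding univ_borel_measurable_def
proof safe
  fix P :: "'x measure" assume P: "prob_space P" "sets P = sets borel"
  have "(\<lambda>x'. \<tau> q (L (h x'))) \<in> borel \<rightarrow>\<^sub>M count_space UNIV"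
    using measurable_compose[OF h_meas L_meas] by (rule measurable_compose) simp
  then have succ: "(\<lambda>x'. \<tau> q (L (h x'))) \<in> completion P \<rightarrow>\<^sub>M count_space UNIV"
    using P(2) by (intro measurable_completion) (simp cong: measurable_cong_sets)
  have sections: "\<And>q'. (\<lambda>x. f (x, q')) \<in> borel_measurable (completion P)"
    using assms P unfolding univ_measurable_sections_def univ_borel_measurable_def by simp
  show "(\<lambda>x'. f (x', \<tau> q (L (h x')))) \<in> borel_measurable (completion P)"
    using measurable_compose_countable[OF sections succ] .
qed

lemma prod_step_eq_nn_integral_next_distr:
  assumes "univ_measurable_sections f"
  shows "K f s = (\<integral>\<^sup>+x'. f (x', \<tau> (snd s) (L (h x'))) \<partial>next_distr s)"
proof -
  have "prob_space (\<mu> s)" "sets (\<mu> s) = sets borel"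
    using mu_space by (auto simp: space_prob_algebra)
  moreover from this(2) have "t (fst s) \<in> \<mu> s \<rightarrow>\<^sub>M prob_algebra borel"
    using t_measurable by (simp cong: measurable_cong_sets)
  ultimately show ?thesis
    unfolding prod_step_def next_distr_def
    by (simp add: nn_integral_bind_univ_borel_measurable univ_borel_measurable_successor assms)
qed

lemma borel_measurable_successor_completion:
  assumes "univ_measurable_sections f"
  shows "(\<lambda>x'. f (x', \<tau> (snd s) (L (h x')))) \<in> borel_measurable (completion (next_distr s))"
  using univ_borel_measurable_successor[OF assms] prob_space_next_distr sets_next_distr
  unfolding univ_borel_measurable_def by blast

lemma prod_step_eq_nn_integral_completion:
  assumes "univ_measurable_sections f"
  shows "K f s = (\<integral>\<^sup>+x'. f (x', \<tau> (snd s) (L (h x'))) \<partial>completion (next_distr s))"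
  using assms by (simp add: prod_step_eq_nn_integral_next_distr nn_integral_completion)

lemma univ_measurable_sections_const: "univ_measurable_sections (\<lambda>_. c)"
  unfolding univ_measurable_sections_def univ_borel_measurable_def by simp

lemma univ_measurable_sections_add:
  "univ_measurable_sections f \<Longrightarrow> univ_measurable_sections g \<Longrightarrow>
    univ_measurable_sections (\<lambda>s. f s + g s)"
  unfolding univ_measurable_sections_def univ_borel_measurable_def by (auto intro!: borel_measurable_add)

lemma univ_measurable_sections_diff:
  "univ_measurable_sections f \<Longrightarrow> univ_measurable_sections g \<Longrightarrow>
    univ_measurable_sections (\<lambda>s. f s - g s)"
  unfolding univ_measurable_sections_def univ_borel_measurable_def by (auto intro!: borel_measurable_minus_ennreal)

lemma univ_measurable_sections_cmult:
  "univ_measurable_sections f \<Longrightarrow> univ_measurable_sections (\<lambda>s. c * f s)"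
  unfolding univ_measurable_sections_def univ_borel_measurable_def by (auto intro!: borel_measurable_times_ennreal)

lemma univ_measurable_sections_sum:
  "(\<And>i. i \<in> I \<Longrightarrow> univ_measurable_sections (f i)) \<Longrightarrow>
    univ_measurable_sections (\<lambda>s. \<Sum>i\<in>I. f i s)"
  unfolding univ_measurable_sections_def univ_borel_measurable_def by (auto intro!: borel_measurable_sum)

lemma prod_step_mono: "(\<And>s'. f s' \<le> g s') \<Longrightarrow> K f s \<le> K g s"
  unfolding prod_step_def by (intro nn_integral_mono) auto

lemma prod_step_const: "K (\<lambda>_. c) s = c"
  using prob_space.emeasure_space_1[OF prob_space_next_distr]
  by (simp add: prod_step_eq_nn_integral_next_distr univ_measurable_sections_const)

lemma prod_step_add:
  assumes "univ_measurable_sections f" "univ_measurable_sections g"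
  shows "K (\<lambda>s. f s + g s) s = K f s + K g s"
  using assms by (simp add: prod_step_eq_nn_integral_completion univ_measurable_sections_add
      nn_integral_add borel_measurable_successor_completion)

lemma prod_step_cmult:
  assumes "univ_measurable_sections f"
  shows "K (\<lambda>s. c * f s) s = c * K f s"
  using assms by (simp add: prod_step_eq_nn_integral_completion univ_measurable_sections_cmult
      nn_integral_cmult borel_measurable_successor_completion)

lemma prod_step_sum:
  assumes "\<And>i. i \<in> I \<Longrightarrow> univ_measurable_sections (f i)"
  shows "K (\<lambda>s. \<Sum>i\<in>I. f i s) s = (\<Sum>i\<in>I. K (f i) s)"
  using assms by (simp add: prod_step_eq_nn_integral_completion univ_measurable_sections_sum
      nn_integral_sum borel_measurable_successor_completion)

lemma univ_measurable_sections_prod_step: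
  assumes f: "univ_measurable_sections f"
  shows "univ_measurable_sections (K f)"
  unfolding univ_measurable_sections_def univ_borel_measurable_def
proof safe
  fix q and P :: "'x measure" assume P: "prob_space P" "sets P = sets borel"
  have "(\<lambda>x. x) \<in> completion P \<rightarrow>\<^sub>M borel"
    using P(2) by (intro measurable_completion) (simp cong: measurable_cong_sets)
  then have "(\<lambda>(x, u). (x, u)) \<in> completion P \<Otimes>\<^sub>M borel \<rightarrow>\<^sub>M borel \<Otimes>\<^sub>M borel"
    by measurable
  from measurable_compose[OF this kernel]
  have "(\<lambda>(x, u). t x u) \<in> completion P \<Otimes>\<^sub>M borel \<rightarrow>\<^sub>M prob_algebra borel"
    by (simp add: case_prod_beta')
  with mu_section_measurable[OF P]
  have "(\<lambda>x. next_distr (x, q)) \<in> completion P \<rightarrow>\<^sub>M prob_algebra borel"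
    unfolding next_distr_def fst_conv by (rule measurable_bind_prob_space2)
  from measurable_nn_integral_kernel_completion[OF P(1) this univ_borel_measurable_successor[OF f]]
  show "(\<lambda>x. K f (x, q)) \<in> borel_measurable (completion P)"
    by (simp add: prod_step_eq_nn_integral_next_distr f)
qed

lemma prod_step_le_1: "(\<And>s'. f s' \<le> 1) \<Longrightarrow> K f s \<le> 1"
  using prod_step_mono[of f "\<lambda>_. 1"] by (simp add: prod_step_const)

lemma univ_measurable_sections_hit_le: "univ_measurable_sections (hit_le K (UNIV \<times> F) n)"
proof (induction n)
  case 0
  show ?case
    unfolding univ_measurable_sections_def univ_borel_measurable_def by (simp add: indicator_def)
next
  case (Suc n)
  have "(\<lambda>x. hit_le K (UNIV \<times> F) (Suc n) (x, q)) =
      (if q \<in> F then (\<lambda>_. 1) else (\<lambda>x. K (hit_le K (UNIV \<times> F) n) (x, q)))" for q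
    by auto
  with univ_measurable_sections_prod_step[OF Suc] show ?case
    unfolding univ_measurable_sections_def univ_borel_measurable_def by simp
qed

context
  fixes F :: "'q set" and \<delta> :: real
begin

abbreviation hit :: "nat \<Rightarrow> 'x \<times> 'q \<Rightarrow> ennreal" where
  "hit \<equiv> hit_le K (UNIV \<times> F)"

abbreviation tail_sum :: "nat \<Rightarrow> 'x \<times> 'q \<Rightarrow> ennreal" where
  "tail_sum l s \<equiv> \<Sum>m<l. 1 - hit m s"

abbreviation V_iter :: "nat \<Rightarrow> 'x \<times> 'q \<Rightarrow> real" where
  "V_iter l \<equiv> (T_mu_delta t h L \<tau> F \<mu> \<delta> ^^ l) (\<lambda>_. 0)"

abbreviation S_iter :: "nat \<Rightarrow> 'x \<times> 'q \<Rightarrow> ennreal" where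
  "S_iter l s \<equiv> ennreal (max (indicator F (snd s)) (V_iter l s))"

lemma hit_le_le_1: "hit l s \<le> 1"
  by (induction l arbitrary: s) (simp_all add: indicator_def prod_step_le_1)

lemma univ_measurable_sections_tail_sum: "univ_measurable_sections (tail_sum l)"
  by (intro univ_measurable_sections_sum univ_measurable_sections_diff
      univ_measurable_sections_const univ_measurable_sections_hit_le)

lemma prod_step_one_minus_hit:
  assumes "s \<notin> UNIV \<times> F"
  shows "K (\<lambda>s'. 1 - hit m s') s = 1 - hit (Suc m) s"
proof -
  have "K (\<lambda>s'. (1 - hit m s') + hit m s') s = K (\<lambda>s'. 1 - hit m s') s + K (hit m) s"
    by (intro prod_step_add univ_measurable_sections_diff univ_measurable_sections_const
        univ_measurable_sections_hit_le)
  moreover have "(\<lambda>s'. (1 - hit m s') + hit m s') = (\<lambda>_. 1)"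
    using hit_le_le_1[of m] by (simp add: diff_add_cancel_ennreal fun_eq_iff)
  moreover have "K (hit m) s = hit (Suc m) s"
    using assms by simp
  ultimately have sum_eq: "K (\<lambda>s'. 1 - hit m s') s + hit (Suc m) s = 1"
    by (simp only: prod_step_const)
  have "hit (Suc m) s \<noteq> top"
    using hit_le_le_1[of "Suc m" s] by (auto simp: top_unique)
  then have "K (\<lambda>s'. 1 - hit m s') s = (K (\<lambda>s'. 1 - hit m s') s + hit (Suc m) s) - hit (Suc m) s"
    by (rule ennreal_add_diff_cancel_right[symmetric])
  then show ?thesis
    unfolding sum_eq .
qed

lemma tail_sum_Suc:
  assumes "s \<notin> UNIV \<times> F"
  shows "tail_sum (Suc l) s = 1 + K (tail_sum l) s"
proof -
  have "tail_sum (Suc l) s = (1 - hit 0 s) + (\<Sum>m<l. 1 - hit (Suc m) s)"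
    by (rule sum.lessThan_Suc_shift)
  also have "hit 0 s = 0"
    using assms by simp
  also have "(\<Sum>m<l. 1 - hit (Suc m) s) = K (tail_sum l) s"
    using assms by (simp add: prod_step_sum prod_step_one_minus_hit univ_measurable_sections_diff
        univ_measurable_sections_const univ_measurable_sections_hit_le del: hit_le.simps)
  finally show ?thesis by simp
qed

lemma V_iter_Suc: "V_iter (Suc l) s = clip01 (enn2real (K (S_iter l) s) - \<delta>)"
  by (simp only: funpow.simps comp_def T_mu_delta_def T_mu_def)

lemma V_iter_bounds: "0 \<le> V_iter l s" "V_iter l s \<le> 1"
proof (atomize (full), cases l)
  case (Suc m)
  show "0 \<le> V_iter l s \<and> V_iter l s \<le> 1"
    unfolding Suc V_iter_Suc clip01_def by linarith
qed simp

lemma S_iter_le_1: "S_iter l s \<le> 1"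
  using V_iter_bounds(2)[of l s] by (simp add: indicator_def)

lemma prod_step_S_iter_le_1: "K (S_iter l) s \<le> 1"
  by (rule prod_step_le_1) (rule S_iter_le_1)

lemma prod_step_S_iter_less_top: "K (S_iter l) s < top"
  using prod_step_S_iter_le_1 ennreal_one_less_top by (rule le_less_trans)

lemma prod_step_S_iter_eq_ennreal: "K (S_iter l) s = ennreal (enn2real (K (S_iter l) s))"
  by (simp add: prod_step_S_iter_less_top)

lemma incseq_V_iter: "incseq (\<lambda>l. V_iter l s)"
proof (rule incseq_SucI)
  show "V_iter l s \<le> V_iter (Suc l) s" for l
  proof (induction l arbitrary: s)
    case 0
    have "V_iter 0 s = 0" by simp
    then show ?case using V_iter_bounds(1)[of "Suc 0" s] by linarith
  next
    case (Suc l)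
    have "K (S_iter l) s \<le> K (S_iter (Suc l)) s"
      using Suc.IH by (intro prod_step_mono ennreal_leI max.mono order.refl)
    then have "enn2real (K (S_iter l) s) \<le> enn2real (K (S_iter (Suc l)) s)"
      using prod_step_S_iter_less_top by (rule enn2real_mono)
    then have "clip01 (enn2real (K (S_iter l) s) - \<delta>) \<le> clip01 (enn2real (K (S_iter (Suc l)) s) - \<delta>)"
      unfolding clip01_def by (intro min.mono max.mono order.refl diff_right_mono)
    then show ?case
      by (simp only: V_iter_Suc)
  qed
qed

lemma S_iter_le_hit:
  assumes "\<delta> \<ge> 0"
  shows "S_iter l s \<le> hit l s"
proof (induction l arbitrary: s)
  case 0
  then show ?case by (cases s) (simp add: indicator_def)
next
  case (Suc l)
  show ?case
  proof (cases "snd s \<in> F")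
    case True
    then show ?thesis using S_iter_le_1[of s "Suc l"] by (cases s) simp
  next
    case False
    have "V_iter (Suc l) s \<le> enn2real (K (S_iter l) s)"
      using assms enn2real_nonneg[of "K (S_iter l) s"] unfolding V_iter_Suc clip01_def by linarith
    then have "S_iter (Suc l) s \<le> K (S_iter l) s"
      using False V_iter_bounds(1)[of "Suc l" s]
      by (subst prod_step_S_iter_eq_ennreal) (simp add: ennreal_leI)
    also have "\<dots> \<le> K (hit l) s"
      using Suc.IH by (rule prod_step_mono)
    also have "\<dots> = hit (Suc l) s"
      using False by (cases s) simp
    finally show ?thesis .
  qed
qed

lemma prod_step_S_iter_le:
  assumes "\<delta> \<ge> 0" and "snd s \<notin> F"
  shows "K (S_iter l) s \<le> S_iter (Suc l) s + ennreal \<delta>"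
proof -
  define r where "r = enn2real (K (S_iter l) s)"
  have "r \<le> 1"
    using enn2real_mono[OF prod_step_S_iter_le_1 ennreal_one_less_top] unfolding r_def by simp
  then have "V_iter (Suc l) s = max 0 (r - \<delta>)"
    using assms(1) unfolding V_iter_Suc r_def[symmetric] by (simp add: clip01_def)
  then have "S_iter (Suc l) s + ennreal \<delta> = ennreal (max 0 (r - \<delta>) + \<delta>)"
    using assms by (simp add: ennreal_plus)
  moreover have "K (S_iter l) s = ennreal r"
    unfolding r_def by (rule prod_step_S_iter_eq_ennreal)
  ultimately show ?thesis
    by (simp add: ennreal_leI)
qed

lemma hit_le_le_S_iter_tail_sum:
  assumes "\<delta> \<ge> 0"
  shows "hit l s \<le> S_iter l s + ennreal \<delta> * tail_sum l s"
proof (induction l arbitrary: s)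
  case 0
  then show ?case by (cases s) (simp add: indicator_def)
next
  case (Suc l)
  show ?case
  proof (cases "snd s \<in> F")
    case True
    then have "hit (Suc l) s \<le> S_iter (Suc l) s"
      by (cases s) simp
    then show ?thesis
      by (rule order_trans) (rule add_increasing2, simp_all)
  next
    case False
    then have nA: "s \<notin> UNIV \<times> F" by auto
    \<comment> \<open>\<open>K\<close> is additive only on universally measurable functions, which \<open>S_iter l\<close> is
      not known to be; the truncated difference \<open>G \<le> S_iter l\<close> is.\<close>
    define G where "G s' = hit l s' - ennreal \<delta> * tail_sum l s'" for s'
    have G: "univ_measurable_sections G"
      unfolding G_def by (intro univ_measurable_sections_diff univ_measurable_sections_cmult
          univ_measurable_sections_hit_le univ_measurable_sections_tail_sum)
    have G_le: "G s' \<le> S_iter l s'" for s'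
      using Suc.IH[of s'] neq_top_trans[OF ennreal_one_neq_top hit_le_le_1[of l s']]
      unfolding G_def by (simp add: ennreal_minus_le_iff add.commute)
    have hit_le_G: "hit l s' \<le> G s' + ennreal \<delta> * tail_sum l s'" for s'
      unfolding G_def by (auto simp: diff_add_self_ennreal not_le intro: less_imp_le)
    have "hit (Suc l) s = K (hit l) s"
      using nA by simp
    also have "\<dots> \<le> K (\<lambda>s'. G s' + ennreal \<delta> * tail_sum l s') s"
      using hit_le_G by (rule prod_step_mono)
    also have "\<dots> = K G s + ennreal \<delta> * K (tail_sum l) s"
      by (simp add: prod_step_add prod_step_cmult G univ_measurable_sections_cmult
          univ_measurable_sections_tail_sum)
    also have "\<dots> \<le> K (S_iter l) s + ennreal \<delta> * K (tail_sum l) s"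
      using G_le by (intro add_right_mono prod_step_mono)
    also have "\<dots> \<le> S_iter (Suc l) s + ennreal \<delta> + ennreal \<delta> * K (tail_sum l) s"
      using assms False by (intro add_right_mono prod_step_S_iter_le)
    also have "\<dots> = S_iter (Suc l) s + ennreal \<delta> * tail_sum (Suc l) s"
      unfolding tail_sum_Suc[OF nA] by (simp add: distrib_left add.assoc)
    finally show ?thesis .
  qed
qed

lemma V_iter_tendsto_V_inf: "(\<lambda>l. V_iter l s) \<longlonglongrightarrow> V_inf t h L \<tau> F \<mu> \<delta> s"
proof -
  note incseq_V_iter
  moreover have "bdd_above (range (\<lambda>l. V_iter l s))"
    using V_iter_bounds(2) by (intro bdd_aboveI2)
  ultimately have "convergent (\<lambda>l. V_iter l s)"
    using LIMSEQ_incseq_SUP convergentI by blast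
  then show ?thesis
    unfolding V_inf_def by (rule convergent_LIMSEQ_iff[THEN iffD1])
qed

lemma reach_prob_eq_ennreal:
  "reach_prob K (UNIV \<times> F) s = ennreal (enn2real (reach_prob K (UNIV \<times> F) s))"
proof -
  have "reach_prob K (UNIV \<times> F) s \<le> 1"
    unfolding reach_prob_def by (rule SUP_least) (rule hit_le_le_1)
  then show ?thesis
    using ennreal_one_less_top by (simp add: le_less_trans)
qed

lemma V_inf_le_reach_prob:
  assumes "\<delta> \<ge> 0"
  shows "max (indicator F (snd s)) (V_inf t h L \<tau> F \<mu> \<delta> s) \<le> enn2real (reach_prob K (UNIV \<times> F) s)"
proof -
  let ?P = "enn2real (reach_prob K (UNIV \<times> F) s)"
  have "ennreal (max (indicator F (snd s)) (V_iter l s)) \<le> ennreal ?P" for l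
  proof -
    have "S_iter l s \<le> hit l s" using assms by (rule S_iter_le_hit)
    also have "\<dots> \<le> reach_prob K (UNIV \<times> F) s"
      unfolding reach_prob_def by (rule SUP_upper) simp
    finally show ?thesis by (subst (asm) reach_prob_eq_ennreal)
  qed
  then have bound: "max (indicator F (snd s)) (V_iter l s) \<le> ?P" for l
    by (simp add: ennreal_le_iff del: max.bounded_iff)
  have "V_inf t h L \<tau> F \<mu> \<delta> s \<le> ?P"
    using V_iter_tendsto_V_inf by (rule LIMSEQ_le_const2) (use bound in auto)
  moreover have "indicator F (snd s) \<le> ?P"
    using bound[of 0] by simp
  ultimately show ?thesis by simp
qed

lemma reach_prob_le_V_inf_plus_mean_hit:
  assumes "\<delta> \<ge> 0"
  shows "ereal (enn2real (reach_prob K (UNIV \<times> F) s)) - ereal \<delta> * enn2ereal (mean_hit K (UNIV \<times> F) s)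
    \<le> ereal (max (indicator F (snd s)) (V_inf t h L \<tau> F \<mu> \<delta> s))"
proof (rule ereal_diff_mult_le_of_ennreal[OF _ assms])
  let ?S = "max (indicator F (snd s)) (V_inf t h L \<tau> F \<mu> \<delta> s)"
  show "0 \<le> ?S" by (simp add: max.coboundedI1)
  have "V_iter l s \<le> V_inf t h L \<tau> F \<mu> \<delta> s" for l
    using incseq_V_iter V_iter_tendsto_V_inf by (rule incseq_le)
  then have "S_iter l s \<le> ennreal ?S" for l
    by (intro ennreal_leI max.mono order.refl)
  moreover have "tail_sum l s \<le> mean_hit K (UNIV \<times> F) s" for l
    unfolding mean_hit_def suminf_eq_SUP by (rule SUP_upper) simp
  ultimately have "hit l s \<le> ennreal ?S + ennreal \<delta> * mean_hit K (UNIV \<times> F) s" for l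
    using hit_le_le_S_iter_tail_sum[OF assms, of l s] by (meson add_mono mult_left_mono order_trans zero_le)
  then have "reach_prob K (UNIV \<times> F) s \<le> ennreal ?S + ennreal \<delta> * mean_hit K (UNIV \<times> F) s"
    unfolding reach_prob_def by (rule SUP_least)
  then show "ennreal (enn2real (reach_prob K (UNIV \<times> F) s))
      \<le> ennreal ?S + ennreal \<delta> * mean_hit K (UNIV \<times> F) s"
    by (subst (asm) reach_prob_eq_ennreal)
qed

end

end

theorem corollary2:
  fixes t :: "'x::polish_space \<Rightarrow> 'u::polish_space \<Rightarrow> 'x measure"
    and h :: "'x \<Rightarrow> 'y::metric_space"
    and x0 :: 'x
    and L :: "'y \<Rightarrow> 'ap::finite set"
    and \<tau> :: "'q::finite \<Rightarrow> 'ap set \<Rightarrow> 'q"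
    and q0 :: 'q
    and F :: "'q set"
    and \<mu> :: "'x \<times> 'q \<Rightarrow> 'u measure"
    and \<delta> :: real
  assumes kernel: "case_prod t \<in> measurable (borel \<Otimes>\<^sub>M borel) (prob_algebra borel)"
    and h_meas: "h \<in> borel_measurable borel"
    and L_meas: "L \<in> measurable borel (count_space UNIV)"
    and policy: "univ_measurable \<mu> (prob_algebra borel)"
    and delta: "\<delta> \<ge> 0"
  shows
    "let q0' = \<tau> q0 (L (h x0));
         K = prod_step t h L \<tau> \<mu>;
         A = UNIV \<times> F;
         P = enn2real (reach_prob K A (x0, q0'));
         S = max (indicator F q0') (V_inf t h L \<tau> F \<mu> \<delta> (x0, q0'))
     in P \<ge> S \<and> ereal S \<ge> ereal P - ereal \<delta> * enn2ereal (mean_hit K A (x0, q0'))"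
proof -
  interpret gmdp_dfa_product t h L \<tau> \<mu>
    using kernel h_meas L_meas policy by unfold_locales
  let ?s0 = "(x0, \<tau> q0 (L (h x0)))"
  show ?thesis
    using V_inf_le_reach_prob[OF delta, where F = F and s = ?s0]
      reach_prob_le_V_inf_plus_mean_hit[OF delta, where F = F and s = ?s0]
    unfolding Let_def by simp
qed

end
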